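(* Let $R$ be a commutative associative ring with unit element, let $b\in R$, and let $m\ge 1$. Let $T_{b+1,b}$ be the symmetric $2m\times 2m$ matrix over $R$ whose diagonal entries are $0$, whose entries in positions $(i,i+1)$ and $(i+1,i)$ ($1\le i\le 2m-1$) equal $b+1$, and all of whose other entries equal $b$. Then $\mathrm{Hf}(T_{b+1,b})=y_m(b)$, where $y_m(x)=\sum_{k=0}^m \frac{(m+k)!}{k!\,(m-k)!}\left(\frac{x}{2}\right)^k=\sum_{k=0}^m \frac{(m+k)!}{k!\,(m-k)!\,2^k}x^k$ is the Bessel polynomial of degree $m$ (its coefficients are integers, so it can be evaluated in $R$).
   Context: For a symmetric matrix $A=(a_{ij})$ of order $n=2m$ over a commutative ring, the hafnian is $\mathrm{Hf}(A)=\sum a_{i_1i_2}a_{i_3i_4}\cdots a_{i_{n-1}i_n}$, where the sum runs over all partitions of $\{1,\dots,n\}$ into $m$ disjoint unordered pairs $\{i_1,i_2\},\dots,\{i_{n-1},i_n\}$ (each partition counted once). Diagonal entries do not enter the definition. *)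

theory Defs
  imports Main
begin

definition perfect_matchings :: "'i set \<Rightarrow> 'i set set set" where
  "perfect_matchings S = {M. (\<forall>p\<in>M. card p = 2 \<and> p \<subseteq> S)
       \<and> (\<forall>p\<in>M. \<forall>q\<in>M. p \<noteq> q \<longrightarrow> p \<inter> q = {}) \<and> \<Union>M = S}"

text \<open>Hafnian of a matrix of order n (indices 0..n-1). For a pair p = {i,j}
  with i<j the factor is A i j (A is symmetric in the intended use).\<close>
definition hafnian :: "nat \<Rightarrow> (nat \<Rightarrow> nat \<Rightarrow> 'a::comm_ring_1) \<Rightarrow> 'a" where
  "hafnian n A = (\<Sum>M\<in>perfect_matchings {0..<n}. \<Prod>p\<in>M. A (Min p) (Max p))"

definition T_mat :: "nat \<Rightarrow> 'a::comm_ring_1 \<Rightarrow> nat \<Rightarrow> nat \<Rightarrow> 'a" where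
  "T_mat n b i j = (if i = j then 0 else if i + 1 = j \<or> j + 1 = i then b + 1 else b)"

text \<open>Bessel polynomial y_m evaluated at x; the coefficient
  (m+k)!/(k!(m-k)!2^k) is an integer, so nat division is exact.\<close>
definition bessel_poly :: "nat \<Rightarrow> 'a::comm_ring_1 \<Rightarrow> 'a" where
  "bessel_poly m x = (\<Sum>k=0..m. of_nat (fact (m + k) div (fact k * fact (m - k) * 2 ^ k)) * x ^ k)"

end

theory Submission
  imports Defs
begin

text \<open>Off the diagonal, T is b plus the adjacency matrix of the path 0 - 1 - ... - (2m-1).
  Expanding the product of the factors (adj p + b) over a perfect matching M gives the sum of
  b^(m - |X|) over the sets X \<subseteq> M of path edges. After exchanging the two sums, a matching X
  of the path with j edges lies in exactly (2(m-j)-1)!! perfect matchings, and the path on 2m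
  vertices has C(2m-j, j) matchings with j edges. Hence Hf(T) is the sum over j of
  C(2m-j, j) (2(m-j)-1)!! b^(m-j), and for k = m - j the coefficient C(m+k, 2k) (2k-1)!! equals
  (m+k)!/(k! (m-k)! 2^k).\<close>

lemma perfect_matchingsD:
  assumes "M \<in> perfect_matchings S"
  shows "\<And>p. p \<in> M \<Longrightarrow> card p = 2 \<and> p \<subseteq> S"
    and "\<And>p q. p \<in> M \<Longrightarrow> q \<in> M \<Longrightarrow> p \<noteq> q \<Longrightarrow> p \<inter> q = {}"
    and "\<Union>M = S"
  using assms unfolding perfect_matchings_def by auto

lemma perfect_matchings_empty: "perfect_matchings {} = {{}}"
  unfolding perfect_matchings_def by (auto simp: card_gt_0_iff)

lemma finite_perfect_matchings: "finite S \<Longrightarrow> finite (perfect_matchings S)"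
  by (rule finite_subset[of _ "Pow (Pow S)"]) (auto simp: perfect_matchings_def)

lemma perfect_matching_doubleton: "x \<noteq> y \<Longrightarrow> {{x, y}} \<in> perfect_matchings {x, y}"
  unfolding perfect_matchings_def by auto

lemma perfect_matching_Un:
  assumes M: "M \<in> perfect_matchings A" and N: "N \<in> perfect_matchings B" and "A \<inter> B = {}"
  shows "M \<union> N \<in> perfect_matchings (A \<union> B)"
  unfolding perfect_matchings_def
proof (intro CollectI conjI ballI impI)
  fix p assume "p \<in> M \<union> N"
  then show "card p = 2" "p \<subseteq> A \<union> B"
    using perfect_matchingsD(1)[OF M] perfect_matchingsD(1)[OF N] by auto
next
  have mixed: "p \<inter> q = {} \<and> q \<inter> p = {}" if "p \<in> M" "q \<in> N" for p q
    using perfect_matchingsD(1)[OF M that(1)] perfect_matchingsD(1)[OF N that(2)] \<open>A \<inter> B = {}\<close>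
    by auto
  show "p \<inter> q = {}" if "p \<in> M \<union> N" "q \<in> M \<union> N" "p \<noteq> q" for p q
    using that perfect_matchingsD(2)[OF M, of p q] perfect_matchingsD(2)[OF N, of p q]
      mixed[of p q] mixed[of q p] by blast
next
  show "\<Union>(M \<union> N) = A \<union> B"
    using perfect_matchingsD(3)[OF M] perfect_matchingsD(3)[OF N] by simp
qed

lemma perfect_matching_Diff:
  assumes M: "M \<in> perfect_matchings S" and N: "N \<in> perfect_matchings U" and "N \<subseteq> M"
  shows "M - N \<in> perfect_matchings (S - U)"
proof -
  have "p \<inter> q = {}" if "p \<in> M - N" "q \<in> N" for p q
    using perfect_matchingsD(2)[OF M] that \<open>N \<subseteq> M\<close> by auto
  then have disj: "p \<inter> U = {}" if "p \<in> M - N" for p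
    using that unfolding perfect_matchingsD(3)[OF N, symmetric] by auto
  show ?thesis
    unfolding perfect_matchings_def
  proof (intro CollectI conjI ballI impI)
    fix p assume "p \<in> M - N"
    then show "card p = 2" "p \<subseteq> S - U"
      using perfect_matchingsD(1)[OF M] disj by auto
  next
    show "p \<inter> q = {}" if "p \<in> M - N" "q \<in> M - N" "p \<noteq> q" for p q
      using that perfect_matchingsD(2)[OF M] by auto
  next
    show "\<Union>(M - N) = S - U"
    proof
      show "\<Union>(M - N) \<subseteq> S - U"
        using perfect_matchingsD(1)[OF M] disj by blast
      show "S - U \<subseteq> \<Union>(M - N)"
        unfolding perfect_matchingsD(3)[OF M, symmetric] perfect_matchingsD(3)[OF N, symmetric]
        by blast
    qed
  qed
qed

lemma perfect_matching_card:
  assumes "M \<in> perfect_matchings S" "finite S"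
  shows "finite M" "card S = 2 * card M"
proof -
  note M = perfect_matchingsD[OF assms(1)]
  show "finite M"
    using M(1) assms(2) by (meson PowI finite_Pow_iff finite_subset subsetI)
  have "card (\<Union>M) = (\<Sum>p\<in>M. card p)"
    using M(1,2) assms(2) by (intro card_Union_disjoint) (auto simp: pairwise_def disjnt_def card_ge_0_finite)
  then show "card S = 2 * card M"
    using M(1,3) by simp
qed

lemma perfect_matchings_insert_bij:
  assumes "x \<notin> S"
  shows "bij_betw (\<lambda>(y, M). insert {x, y} M) (SIGMA y:S. perfect_matchings (S - {y}))
           (perfect_matchings (insert x S))"
proof (rule bij_betw_imageI)
  show "inj_on (\<lambda>(y, M). insert {x, y} M) (SIGMA y:S. perfect_matchings (S - {y}))"
  proof (rule inj_onI, clarsimp)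
    fix y M y' M'
    assume "M \<in> perfect_matchings (S - {y})" "M' \<in> perfect_matchings (S - {y'})"
      and eq: "insert {x, y} M = insert {x, y'} M'"
    then have "\<Union>M = S - {y}" "\<Union>M' = S - {y'}"
      by (simp_all add: perfect_matchingsD(3))
    then have "x \<notin> \<Union>M" "x \<notin> \<Union>M'"
      using assms by simp_all
    moreover have "{x, y} \<in> insert {x, y'} M'"
      using eq by blast
    ultimately have "y = y'" "{x, y} \<notin> M" "{x, y'} \<notin> M'"
      by (auto simp: doubleton_eq_iff)
    with eq show "y = y' \<and> M = M'"
      by (metis insert_ident)
  qed
  show "(\<lambda>(y, M). insert {x, y} M) ` (SIGMA y:S. perfect_matchings (S - {y})) = perfect_matchings (insert x S)"
  proof (intro equalityI subsetI)
    fix N assume "N \<in> (\<lambda>(y, M). insert {x, y} M) ` (SIGMA y:S. perfect_matchings (S - {y}))"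
    then obtain y M where y: "y \<in> S" and M: "M \<in> perfect_matchings (S - {y})" and N: "N = {{x, y}} \<union> M"
      by auto
    have xy: "x \<noteq> y" and disj: "{x, y} \<inter> (S - {y}) = {}" and un: "{x, y} \<union> (S - {y}) = insert x S"
      using assms y by auto
    have "{{x, y}} \<union> M \<in> perfect_matchings ({x, y} \<union> (S - {y}))"
      by (rule perfect_matching_Un[OF perfect_matching_doubleton[OF xy] M disj])
    then show "N \<in> perfect_matchings (insert x S)"
      unfolding N un .
  next
    fix N assume N: "N \<in> perfect_matchings (insert x S)"
    have "x \<in> \<Union>N"
      using perfect_matchingsD(3)[OF N] by simp
    then obtain p where p: "p \<in> N" "x \<in> p"
      by blast
    then have "card p = 2" "p \<subseteq> insert x S"
      using perfect_matchingsD(1)[OF N] by auto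
    then have "card (p - {x}) = 1"
      using p(2) by (simp add: card_Diff_singleton_if)
    then obtain y where "p - {x} = {y}"
      by (rule card_1_singletonE)
    then have y: "p = {x, y}" "x \<noteq> y" and "y \<in> S"
      using p(2) \<open>p \<subseteq> insert x S\<close> by auto
    have "N - {p} \<in> perfect_matchings (insert x S - {x, y})"
      using perfect_matching_Diff[OF N perfect_matching_doubleton[OF y(2)]] p(1) y(1) by simp
    also have "insert x S - {x, y} = S - {y}"
      using assms by auto
    finally have "(y, N - {p}) \<in> (SIGMA y:S. perfect_matchings (S - {y}))"
      using \<open>y \<in> S\<close> by simp
    moreover have "N = (\<lambda>(y, M). insert {x, y} M) (y, N - {p})"
      using p(1) y(1) by auto
    ultimately show "N \<in> (\<lambda>(y, M). insert {x, y} M) ` (SIGMA y:S. perfect_matchings (S - {y}))"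
      by (rule rev_image_eqI)
  qed
qed

definition odd_double_factorial :: "nat \<Rightarrow> nat" where
  "odd_double_factorial k = (\<Prod>i<k. 2 * i + 1)"

lemma card_perfect_matchings:
  "finite S \<Longrightarrow> card S = 2 * k \<Longrightarrow> card (perfect_matchings S) = odd_double_factorial k"
proof (induction k arbitrary: S)
  case 0
  then show ?case
    by (simp add: perfect_matchings_empty odd_double_factorial_def)
next
  case (Suc k)
  then obtain x where "x \<in> S"
    by fastforce
  define S' where "S' = S - {x}"
  have S': "finite S'" "x \<notin> S'" "S = insert x S'" "card S' = 2 * k + 1"
    using Suc.prems \<open>x \<in> S\<close> by (auto simp: S'_def)
  have "card (perfect_matchings S) = card (SIGMA y:S'. perfect_matchings (S' - {y}))"
    using bij_betw_same_card[OF perfect_matchings_insert_bij[OF S'(2)]] S'(3) by simp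
  also have "\<dots> = (\<Sum>y\<in>S'. card (perfect_matchings (S' - {y})))"
    using S'(1) by (simp add: card_SigmaI finite_perfect_matchings)
  also have "\<dots> = (\<Sum>y\<in>S'. odd_double_factorial k)"
    using Suc.IH S' by (intro sum.cong) auto
  also have "\<dots> = odd_double_factorial (Suc k)"
    using S'(4) by (simp add: odd_double_factorial_def)
  finally show ?case .
qed

lemma bij_betw_perfect_matchings_extending:
  assumes N: "N \<in> perfect_matchings U" and "U \<subseteq> S"
  shows "bij_betw (\<lambda>M. M - N) {M \<in> perfect_matchings S. N \<subseteq> M} (perfect_matchings (S - U))"
proof (rule bij_betw_byWitness[where f' = "\<lambda>M. M \<union> N"])
  have "M \<inter> N = {}" if M: "M \<in> perfect_matchings (S - U)" for M
  proof -
    have "p = {}" if "p \<in> M \<inter> N" for p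
      using perfect_matchingsD(1)[OF M] perfect_matchingsD(1)[OF N] that by blast
    then show ?thesis
      using perfect_matchingsD(1)[OF M] by fastforce
  qed
  then show "\<forall>M\<in>perfect_matchings (S - U). M \<union> N - N = M"
    by blast
  have "M \<union> N \<in> perfect_matchings S" if "M \<in> perfect_matchings (S - U)" for M
  proof -
    have "(S - U) \<inter> U = {}" "(S - U) \<union> U = S"
      using \<open>U \<subseteq> S\<close> by auto
    then show ?thesis
      using perfect_matching_Un[OF that N] by simp
  qed
  then show "(\<lambda>M. M \<union> N) ` perfect_matchings (S - U) \<subseteq> {M \<in> perfect_matchings S. N \<subseteq> M}"
    by blast
qed (use perfect_matching_Diff[OF _ N] in auto)

lemma card_perfect_matchings_extending:
  assumes "N \<in> perfect_matchings U" "U \<subseteq> S" "finite S" "card S = 2 * m"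
  shows "card {M \<in> perfect_matchings S. N \<subseteq> M} = odd_double_factorial (m - card N)"
proof -
  have "card (S - U) = 2 * (m - card N)"
    using assms perfect_matching_card(2)[OF assms(1)] by (simp add: card_Diff_subset finite_subset)
  then show ?thesis
    using bij_betw_same_card[OF bij_betw_perfect_matchings_extending[OF assms(1,2)]] assms(3)
    by (simp add: card_perfect_matchings)
qed

definition path_edges :: "nat \<Rightarrow> nat set set" where
  "path_edges n = (\<lambda>i. {i, Suc i}) ` {i. Suc i < n}"

definition path_matchings :: "nat \<Rightarrow> nat set set set" where
  "path_matchings n = {N. N \<subseteq> path_edges n \<and> pairwise disjnt N}"

lemma finite_path_edges: "finite (path_edges n)"
  unfolding path_edges_def by (rule finite_imageI, rule finite_subset[of _ "{..<n}"]) auto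

lemma finite_path_matchings: "finite (path_matchings n)"
  unfolding path_matchings_def using finite_path_edges by simp

lemma finite_path_matching: "N \<in> path_matchings n \<Longrightarrow> finite N"
  unfolding path_matchings_def using finite_path_edges finite_subset by blast

lemma path_matching_perfect:
  assumes "N \<in> path_matchings n"
  shows "N \<in> perfect_matchings (\<Union>N)" "\<Union>N \<subseteq> {0..<n}"
proof -
  have "card p = 2 \<and> p \<subseteq> {0..<n}" if "p \<in> N" for p
    using assms that unfolding path_matchings_def path_edges_def by auto
  moreover have "p \<inter> q = {}" if "p \<in> N" "q \<in> N" "p \<noteq> q" for p q
    using assms that unfolding path_matchings_def pairwise_def disjnt_def by blast
  ultimately show "N \<in> perfect_matchings (\<Union>N)" "\<Union>N \<subseteq> {0..<n}"
    unfolding perfect_matchings_def by auto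
qed

lemma path_matchings_small: "n \<le> 1 \<Longrightarrow> path_matchings n = {{}}"
  by (auto simp: path_matchings_def path_edges_def)

lemma path_edges_mono: "path_edges n \<subseteq> path_edges (Suc n)"
  unfolding path_edges_def by (rule image_mono) auto

lemma path_edges_Suc_Suc: "path_edges (Suc (Suc n)) = insert {n, Suc n} (path_edges (Suc n))"
proof -
  have "{i. Suc i < Suc (Suc n)} = insert n {i. Suc i < Suc n}"
    by auto
  then show ?thesis
    by (simp add: path_edges_def)
qed

lemma path_matchings_Suc_Suc:
  "path_matchings (Suc (Suc n)) = path_matchings (Suc n) \<union> insert {n, Suc n} ` path_matchings n"
proof (intro equalityI subsetI)
  let ?e = "{n, Suc n}"
  fix N assume N: "N \<in> path_matchings (Suc (Suc n))"
  then have edges: "N \<subseteq> insert ?e (path_edges (Suc n))" and disj: "pairwise disjnt N"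
    by (simp_all add: path_matchings_def path_edges_Suc_Suc)
  show "N \<in> path_matchings (Suc n) \<union> insert ?e ` path_matchings n"
  proof (cases "?e \<in> N")
    case True
    have "q \<in> path_edges n" if q: "q \<in> N - {?e}" for q
    proof -
      obtain i where i: "q = {i, Suc i}" "Suc i < Suc n"
        using edges q unfolding path_edges_def by blast
      have "disjnt q ?e"
        using pairwiseD(1)[OF disj _ True] q by blast
      then have "Suc i < n"
        using i by (auto simp: disjnt_def less_Suc_eq)
      then show ?thesis
        using i(1) unfolding path_edges_def by blast
    qed
    then have "N - {?e} \<in> path_matchings n"
      using pairwise_subset[OF disj] unfolding path_matchings_def by blast
    moreover have "N = insert ?e (N - {?e})"
      using True by blast
    ultimately show ?thesis
      by blast
  next
    case False
    then show ?thesis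
      using edges disj unfolding path_matchings_def by blast
  qed
next
  let ?e = "{n, Suc n}"
  fix N assume "N \<in> path_matchings (Suc n) \<union> insert ?e ` path_matchings n"
  then consider "N \<in> path_matchings (Suc n)" | M where "M \<in> path_matchings n" "N = insert ?e M"
    by blast
  then show "N \<in> path_matchings (Suc (Suc n))"
  proof cases
    case 1
    then show ?thesis
      using path_edges_mono[of "Suc n"] unfolding path_matchings_def by blast
  next
    case (2 M)
    have M: "M \<subseteq> path_edges n" "pairwise disjnt M"
      using 2(1) unfolding path_matchings_def by blast+
    have "disjnt ?e q \<and> disjnt q ?e" if "q \<in> M" for q
      using M(1) that unfolding path_edges_def disjnt_def by auto
    then have "pairwise disjnt N"
      using M(2) 2(2) by (simp add: pairwise_insert)
    moreover have "N \<subseteq> path_edges (Suc (Suc n))"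
      using M(1) 2(2) path_edges_mono[of n] path_edges_Suc_Suc by blast
    ultimately show ?thesis
      by (simp add: path_matchings_def)
  qed
qed

lemma path_matchings_mono: "path_matchings n \<subseteq> path_matchings (Suc n)"
  unfolding path_matchings_def using path_edges_mono by blast

lemma last_edge_notin_path_matching: "N \<in> path_matchings (Suc n) \<Longrightarrow> {n, Suc n} \<notin> N"
  unfolding path_matchings_def path_edges_def by (auto simp: doubleton_eq_iff)

lemma path_matchings_of_size_0: "{N \<in> path_matchings n. card N = 0} = {{}}"
  using finite_path_matching by (auto simp: path_matchings_def)

lemma card_path_matchings_of_size: "card {N \<in> path_matchings n. card N = j} = (n - j) choose j"
proof (induction n arbitrary: j rule: induct_nat_012)
  case 0
  then show ?case
    using path_matchings_small[of 0] by (cases j) (simp_all add: Collect_conv_if)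
next
  case 1
  then show ?case
    using path_matchings_small[of 1] by (cases j) (simp_all add: Collect_conv_if)
next
  case (ge2 n)
  show ?case
  proof (cases j)
    case 0
    then show ?thesis
      by (simp add: path_matchings_of_size_0)
  next
    case (Suc i)
    let ?e = "{n, Suc n}" and ?A = "{N \<in> path_matchings (Suc n). card N = Suc i}"
      and ?B = "{N \<in> path_matchings n. card N = i}"
    have notin: "?e \<notin> N" if "N \<in> path_matchings n" for N
      using last_edge_notin_path_matching path_matchings_mono that by blast
    have "{N \<in> path_matchings (Suc (Suc n)). card N = Suc i} = ?A \<union> insert ?e ` ?B"
      using notin finite_path_matching by (auto simp: path_matchings_Suc_Suc)
    moreover have "?A \<inter> insert ?e ` ?B = {}"
      using last_edge_notin_path_matching by blast
    moreover have "inj_on (insert ?e) ?B"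
      using notin by (intro inj_onI) (metis insert_ident mem_Collect_eq)
    ultimately have "card {N \<in> path_matchings (Suc (Suc n)). card N = j} = card ?A + card ?B"
      using Suc finite_path_matchings by (simp add: card_Un_disjoint card_image)
    also have "\<dots> = (Suc (Suc n) - j) choose j"
      using ge2.IH Suc by (cases "i \<le> n") (simp_all add: Suc_diff_le binomial_eq_0)
    finally show ?thesis .
  qed
qed

lemma T_mat_doubleton:
  assumes "i \<noteq> j" "i < n" "j < n"
  shows "T_mat n b (Min {i, j}) (Max {i, j}) = of_bool ({i, j} \<in> path_edges n) + b"
proof -
  have "{i, j} \<in> path_edges n \<longleftrightarrow> Suc i = j \<or> Suc j = i"
    using assms unfolding path_edges_def by (auto simp: doubleton_eq_iff)
  then show ?thesis
    using assms by (auto simp: T_mat_def min_def max_def add.commute)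
qed

lemma prod_of_bool_add:
  fixes b :: "'a::comm_semiring_1"
  assumes "finite M"
  shows "(\<Prod>p\<in>M. of_bool (p \<in> E) + b) = (\<Sum>X | X \<subseteq> M \<and> X \<subseteq> E. b ^ (card M - card X))"
proof -
  have "(\<Prod>p\<in>X. of_bool (p \<in> E) :: 'a) = of_bool (X \<subseteq> E)" if "finite X" for X
    using that by (induction X rule: finite_induct) auto
  then have "(\<Prod>p\<in>M. of_bool (p \<in> E) + b) = (\<Sum>X\<in>Pow M. of_bool (X \<subseteq> E) * b ^ (card M - card X))"
    using assms by (auto simp: prod_add card_Diff_subset finite_subset intro!: sum.cong)
  also have "\<dots> = (\<Sum>X \<in> Pow M \<inter> {X. X \<subseteq> E}. b ^ (card M - card X))"
    using assms by simp
  also have "Pow M \<inter> {X. X \<subseteq> E} = {X. X \<subseteq> M \<and> X \<subseteq> E}"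
    by blast
  finally show ?thesis .
qed

lemma hafnian_T_mat_path_matchings:
  "hafnian (2 * m) (T_mat (2 * m) b) =
     (\<Sum>N\<in>path_matchings (2 * m). of_nat (odd_double_factorial (m - card N)) * b ^ (m - card N))"
proof -
  let ?P = "perfect_matchings {0..<2 * m}" and ?Q = "path_matchings (2 * m)"
  have "(\<Prod>p\<in>M. T_mat (2 * m) b (Min p) (Max p)) = (\<Sum>N\<in>{N \<in> ?Q. N \<subseteq> M}. b ^ (m - card N))"
    if M: "M \<in> ?P" for M
  proof -
    note D = perfect_matchingsD[OF M]
    have "T_mat (2 * m) b (Min p) (Max p) = of_bool (p \<in> path_edges (2 * m)) + b" if p: "p \<in> M" for p
    proof -
      obtain i j where ij: "p = {i, j}" "i \<noteq> j"
        using D(1)[OF p] by (meson card_2_iff)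
      show ?thesis
        unfolding ij(1) using D(1)[OF p] ij by (intro T_mat_doubleton) auto
    qed
    moreover have "{N. N \<subseteq> M \<and> N \<subseteq> path_edges (2 * m)} = {N \<in> ?Q. N \<subseteq> M}"
      using D(2) unfolding path_matchings_def pairwise_def disjnt_def by blast
    ultimately show ?thesis
      using perfect_matching_card[OF M] by (simp add: prod_of_bool_add)
  qed
  then have "hafnian (2 * m) (T_mat (2 * m) b) = (\<Sum>M\<in>?P. \<Sum>N\<in>{N \<in> ?Q. N \<subseteq> M}. b ^ (m - card N))"
    unfolding hafnian_def by simp
  also have "\<dots> = (\<Sum>N\<in>?Q. \<Sum>M\<in>{M \<in> ?P. N \<subseteq> M}. b ^ (m - card N))"
    by (rule sum.swap_restrict) (simp_all add: finite_perfect_matchings finite_path_matchings)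
  also have "\<dots> = (\<Sum>N\<in>?Q. of_nat (odd_double_factorial (m - card N)) * b ^ (m - card N))"
  proof (rule sum.cong[OF refl])
    fix N assume "N \<in> ?Q"
    then have "card {M \<in> ?P. N \<subseteq> M} = odd_double_factorial (m - card N)"
      using path_matching_perfect[of N "2 * m"] by (intro card_perfect_matchings_extending) auto
    then show "(\<Sum>M\<in>{M \<in> ?P. N \<subseteq> M}. b ^ (m - card N)) =
        of_nat (odd_double_factorial (m - card N)) * b ^ (m - card N)"
      by simp
  qed
  finally show ?thesis .
qed

lemma hafnian_T_mat_by_size:
  "hafnian (2 * m) (T_mat (2 * m) b) =
     (\<Sum>j=0..m. of_nat (((2 * m - j) choose j) * odd_double_factorial (m - j)) * b ^ (m - j))"
proof -
  let ?Q = "path_matchings (2 * m)"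
  have "card N \<le> m" if "N \<in> ?Q" for N
  proof -
    have "\<Union>N \<subseteq> {0..<2 * m}"
      using path_matching_perfect(2)[OF that] .
    then have "card (\<Union>N) \<le> 2 * m" "finite (\<Union>N)"
      using card_mono[of "{0..<2 * m}"] finite_subset by fastforce+
    then show ?thesis
      using perfect_matching_card(2)[OF path_matching_perfect(1)[OF that]] by simp
  qed
  then have "(\<Sum>N\<in>?Q. of_nat (odd_double_factorial (m - card N)) * b ^ (m - card N)) =
      (\<Sum>j=0..m. \<Sum>N\<in>{N \<in> ?Q. card N = j}. of_nat (odd_double_factorial (m - card N)) * b ^ (m - card N))"
    by (intro sum.group[symmetric]) (auto simp: finite_path_matchings)
  also have "\<dots> = (\<Sum>j=0..m. of_nat (((2 * m - j) choose j) * odd_double_factorial (m - j)) * b ^ (m - j))"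
    by (simp add: card_path_matchings_of_size mult.assoc)
  finally show ?thesis
    by (simp add: hafnian_T_mat_path_matchings)
qed

lemma fact_double: "fact (2 * k) = (2 ^ k * fact k * odd_double_factorial k :: nat)"
proof (induction k)
  case 0
  then show ?case by (simp add: odd_double_factorial_def)
next
  case (Suc k)
  have "fact (2 * Suc k) = (2 * k + 2) * ((2 * k + 1) * (fact (2 * k) :: nat))"
    by (simp add: algebra_simps)
  then show ?case
    using Suc.IH by (simp add: odd_double_factorial_def algebra_simps)
qed

lemma bessel_coefficient:
  assumes "k \<le> m"
  shows "((m + k) choose (m - k)) * odd_double_factorial k = fact (m + k) div (fact k * fact (m - k) * 2 ^ k)"
proof -
  have "fact (2 * k) * fact (m - k) * ((m + k) choose (2 * k)) = (fact (m + k) :: nat)"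
    using binomial_fact_lemma[of "2 * k" "m + k"] assms by simp
  moreover have "(m + k) choose (m - k) = (m + k) choose (2 * k)"
    using binomial_symmetric[of "2 * k" "m + k"] assms by simp
  ultimately have "fact (m + k) = ((m + k) choose (m - k)) * odd_double_factorial k * (fact k * fact (m - k) * 2 ^ k)"
    unfolding fact_double by (simp add: algebra_simps)
  then show ?thesis
    by simp
qed

text \<open>The identity holds for \<open>m = 0\<close> as well.\<close>
theorem mainTheorem4:
  fixes b :: "'a::comm_ring_1" and m :: nat
  assumes "m \<ge> 1"
  shows "hafnian (2 * m) (T_mat (2 * m) b) = bessel_poly m b"
proof -
  have "hafnian (2 * m) (T_mat (2 * m) b) =
      (\<Sum>j=0..m. of_nat (((2 * m - j) choose j) * odd_double_factorial (m - j)) * b ^ (m - j))"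
    by (rule hafnian_T_mat_by_size)
  also have "\<dots> = (\<Sum>k=0..m. of_nat (((m + k) choose (m - k)) * odd_double_factorial k) * b ^ k)"
  proof (subst sum.atLeastAtMost_rev, rule sum.cong[OF refl])
    fix k assume "k \<in> {0..m}"
    then have "2 * m - (m + 0 - k) = m + k" "m - (m + 0 - k) = k"
      by auto
    then show "of_nat (((2 * m - (m + 0 - k)) choose (m + 0 - k)) * odd_double_factorial (m - (m + 0 - k))) *
        b ^ (m - (m + 0 - k)) = of_nat (((m + k) choose (m - k)) * odd_double_factorial k) * b ^ k"
      by simp
  qed
  also have "\<dots> = bessel_poly m b"
    unfolding bessel_poly_def by (simp add: bessel_coefficient)
  finally show ?thesis .
qed

end
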